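(* Let $X$ be a complex vector space with $\dim_{\mathbb{C}}X\ge2$ and let $Y$ be a strictly convex complex normed space which is sequentially complete (Banach). Let $\Omega\subset X$ be a polygonally connected $2$-open set and $f\in\mathcal{H}_G(\Omega,Y)$. If $x\mapsto\|f(x)\|$ has a $\tau_{(1)}$-local maximum on $\Omega$, then $f$ is constant.
   Context: $\Gamma_{1,d}(X)$ is the set of complex affine subspaces of $X$ of dimension between $1$ and $d$, with Euclidean topology. $A\subset X$ is $d$-open if $A\cap L$ is open in $L$ for all $L\in\Gamma_{1,d}(X)$. $\tau_{(1)}$ is the topology on $X$ whose open sets are the $1$-open sets; a $\tau_{(1)}$-local maximum at $c$ means there is a $1$-open set $U\ni c$ with $\|f(x)\|\le\|f(c)\|$ for $x\in U\cap\Omega$. Polygonally connected: any two points joined by a polygonal chain in the set. $\mathcal{H}_G(\Omega,Y)$: maps $f$ such that for all $a\in\Omega$, $v\in X$, $\varphi\in Y^*$, $\lambda\mapsto\varphi(f(a+\lambda v))$ is holomorphic near $0$. *)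

theory Defs
  imports "HOL-Analysis.Analysis"
begin

text \<open>The complex vector space X is a type 'a with a complex scalar multiplication
  scX satisfying the vector space axioms (no topology on X).\<close>

definition lin_indep :: "(complex \<Rightarrow> 'a::ab_group_add \<Rightarrow> 'a) \<Rightarrow> 'a set \<Rightarrow> bool" where
  "lin_indep sc B \<longleftrightarrow> \<not> module.dependent sc B"

text \<open>dim_C X \<ge> 2 (dimension possibly infinite): there are two linearly independent vectors.\<close>
definition dim_ge2 :: "(complex \<Rightarrow> 'a::ab_group_add \<Rightarrow> 'a) \<Rightarrow> bool" where
  "dim_ge2 sc \<longleftrightarrow> (\<exists>B. lin_indep sc B \<and> finite B \<and> card B = 2)"

text \<open>A set A is d-open if A \<inter> L is open in L (Euclidean topology) for every complex affine
  subspace L of dimension k, 1 \<le> k \<le> d. L = {a + \<Sum>i<k. c_i v_i} with v_0..v_{k-1} linearly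
  independent; openness in L is openness of the coefficient set in C^k (max-norm balls).\<close>
definition d_open :: "(complex \<Rightarrow> 'a::ab_group_add \<Rightarrow> 'a) \<Rightarrow> nat \<Rightarrow> 'a set \<Rightarrow> bool" where
  "d_open sc d A \<longleftrightarrow>
    (\<forall>k\<in>{1..d}. \<forall>(a::'a) (v::nat \<Rightarrow> 'a).
       inj_on v {..<k} \<and> lin_indep sc (v ` {..<k}) \<longrightarrow>
       (\<forall>c::nat \<Rightarrow> complex. a + (\<Sum>i<k. sc (c i) (v i)) \<in> A \<longrightarrow>
          (\<exists>\<epsilon>>0. \<forall>c'::nat \<Rightarrow> complex. (\<forall>i<k. cmod (c' i - c i) < \<epsilon>) \<longrightarrow>
              a + (\<Sum>i<k. sc (c' i) (v i)) \<in> A)))"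

definition seg :: "(complex \<Rightarrow> 'a::ab_group_add \<Rightarrow> 'a) \<Rightarrow> 'a \<Rightarrow> 'a \<Rightarrow> 'a set" where
  "seg sc p q = {sc (complex_of_real (1 - t)) p + sc (complex_of_real t) q | t. 0 \<le> t \<and> t \<le> 1}"

definition polygonally_connected :: "(complex \<Rightarrow> 'a::ab_group_add \<Rightarrow> 'a) \<Rightarrow> 'a set \<Rightarrow> bool" where
  "polygonally_connected sc S \<longleftrightarrow>
    (\<forall>x\<in>S. \<forall>y\<in>S. \<exists>ps::'a list. ps \<noteq> [] \<and> hd ps = x \<and> last ps = y \<and>
        (\<forall>i. Suc i < length ps \<longrightarrow> seg sc (ps ! i) (ps ! Suc i) \<subseteq> S))"

text \<open>Y is a (real) Banach space 'b with a complex scalar multiplication scY compatible with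
  the real one and with the norm, i.e. a complex Banach space.\<close>
definition complex_normed_structure :: "(complex \<Rightarrow> 'b::real_normed_vector \<Rightarrow> 'b) \<Rightarrow> bool" where
  "complex_normed_structure sc \<longleftrightarrow> vector_space sc \<and>
     (\<forall>r y. sc (complex_of_real r) y = r *\<^sub>R y) \<and>
     (\<forall>c y. norm (sc c y) = cmod c * norm y)"

definition strictly_convex :: "'b::real_normed_vector itself \<Rightarrow> bool" where
  "strictly_convex _ \<longleftrightarrow> (\<forall>x y::'b. norm x = 1 \<and> norm y = 1 \<and> x \<noteq> y \<longrightarrow> norm ((1/2) *\<^sub>R (x + y)) < 1)"

definition cdual :: "(complex \<Rightarrow> 'b::real_normed_vector \<Rightarrow> 'b) \<Rightarrow> ('b \<Rightarrow> complex) \<Rightarrow> bool" where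
  "cdual sc \<phi> \<longleftrightarrow> (\<forall>x y. \<phi> (x + y) = \<phi> x + \<phi> y) \<and> (\<forall>c y. \<phi> (sc c y) = c * \<phi> y) \<and>
     (\<exists>K. \<forall>y. cmod (\<phi> y) \<le> K * norm y)"

definition gateaux_holomorphic ::
  "(complex \<Rightarrow> 'a::ab_group_add \<Rightarrow> 'a) \<Rightarrow> (complex \<Rightarrow> 'b::real_normed_vector \<Rightarrow> 'b) \<Rightarrow> 'a set \<Rightarrow> ('a \<Rightarrow> 'b) \<Rightarrow> bool" where
  "gateaux_holomorphic scX scY \<Omega> f \<longleftrightarrow>
     (\<forall>a\<in>\<Omega>. \<forall>v. \<forall>\<phi>. cdual scY \<phi> \<longrightarrow>
        (\<exists>r>0. (\<lambda>z. \<phi> (f (a + scX z v))) holomorphic_on ball 0 r))"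

definition tau1_local_max ::
  "(complex \<Rightarrow> 'a::ab_group_add \<Rightarrow> 'a) \<Rightarrow> 'a set \<Rightarrow> ('a \<Rightarrow> 'b::real_normed_vector) \<Rightarrow> 'a \<Rightarrow> bool" where
  "tau1_local_max scX \<Omega> f c \<longleftrightarrow>
     (\<exists>U. d_open scX 1 U \<and> c \<in> U \<and> (\<forall>x\<in>U \<inter> \<Omega>. norm (f x) \<le> norm (f c)))"

end

(*
  Compose f with a norming functional \<phi> of f c. On every complex line through c the function
  z \<mapsto> \<phi> (f (c + z v)) is holomorphic and its modulus peaks at z = 0, so by the maximum modulus
  principle it is constantly norm (f c); strict convexity of Y then forces f itself to be constant
  near c on each line.

  For any continuous functional \<phi>, the property "\<phi> \<circ> f is constant near the point on every
  complex line" propagates along segments in \<Omega>: in the complex plane spanned by the segment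
  and a second independent direction (dim X \<ge> 2; \<Omega> is 2-open) the function \<phi> \<circ> f is
  holomorphic on complex lines, so the identity theorem on bidiscs carries the constancy from
  one end of the segment to the other. Following a polygon from c to x and choosing \<phi> to norm
  f x - f c gives f x = f c.

  The norming functionals come from the Hahn--Banach theorem, proved here through Zorn's lemma
  for sublinear minorants of the norm.
*)

theory Submission
  imports Defs "HOL-Complex_Analysis.Complex_Analysis"
begin

section \<open>Hahn--Banach for real normed spaces\<close>

definition sublinear :: "('b::real_vector \<Rightarrow> real) \<Rightarrow> bool" where
  "sublinear q \<longleftrightarrow> (\<forall>x y. q (x + y) \<le> q x + q y) \<and> (\<forall>t x. t \<ge> 0 \<longrightarrow> q (t *\<^sub>R x) = t * q x)"

lemma sublinear_add_le: "sublinear q \<Longrightarrow> q (x + y) \<le> q x + q y"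
  unfolding sublinear_def by blast

lemma sublinear_scaleR: "sublinear q \<Longrightarrow> t \<ge> 0 \<Longrightarrow> q (t *\<^sub>R x) = t * q x"
  unfolding sublinear_def by blast

lemma sublinear_zero: "sublinear q \<Longrightarrow> q 0 = 0"
  using sublinear_scaleR[of q 0 0] by simp

lemma sublinear_minus_le: "sublinear q \<Longrightarrow> - q (- x) \<le> q x"
  using sublinear_add_le[of q x "- x"] sublinear_zero[of q] by simp

lemma sublinear_norm: "sublinear norm"
  unfolding sublinear_def by (auto simp: norm_triangle_ineq)

text \<open>The classical one-dimensional step of Hahn--Banach: lowering \<open>q\<close> in the direction \<open>v\<close>
  keeps it sublinear and forces \<open>q (- v) \<le> - q v\<close>.\<close>
definition reduce_along :: "('b::real_vector \<Rightarrow> real) \<Rightarrow> 'b \<Rightarrow> 'b \<Rightarrow> real" where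
  "reduce_along q v x = (INF t\<in>{0..}. q (x + t *\<^sub>R v) - t * q v)"

lemma reduce_along_bdd_below:
  assumes "sublinear q"
  shows "bdd_below ((\<lambda>t. q (x + t *\<^sub>R v) - t * q v) ` {0..})"
proof (rule bdd_belowI2[where m = "- q (- x)"])
  fix t :: real assume "t \<in> {0..}"
  then have "q (t *\<^sub>R v) = t * q v" using assms by (simp add: sublinear_scaleR)
  moreover have "q ((x + t *\<^sub>R v) + - x) \<le> q (x + t *\<^sub>R v) + q (- x)"
    using assms by (rule sublinear_add_le)
  ultimately show "- q (- x) \<le> q (x + t *\<^sub>R v) - t * q v" by simp
qed

lemma reduce_along_le:
  "sublinear q \<Longrightarrow> t \<ge> 0 \<Longrightarrow> reduce_along q v x \<le> q (x + t *\<^sub>R v) - t * q v"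
  unfolding reduce_along_def by (rule cINF_lower[OF reduce_along_bdd_below]) auto

lemma reduce_along_greatest:
  "(\<And>t. t \<ge> 0 \<Longrightarrow> m \<le> q (x + t *\<^sub>R v) - t * q v) \<Longrightarrow> m \<le> reduce_along q v x"
  unfolding reduce_along_def by (rule cINF_greatest) auto

lemma reduce_along_le_self: "sublinear q \<Longrightarrow> reduce_along q v x \<le> q x"
  using reduce_along_le[of q 0 v x] by simp

lemma reduce_along_minus_le: "sublinear q \<Longrightarrow> reduce_along q v (- v) \<le> - q v"
  using reduce_along_le[of q 1 v "- v"] by (simp add: sublinear_zero)

lemma reduce_along_add_le:
  assumes q: "sublinear q"
  shows "reduce_along q v (x + y) \<le> reduce_along q v x + reduce_along q v y"
proof -
  have "reduce_along q v (x + y) - (q (y + t *\<^sub>R v) - t * q v) \<le> q (x + s *\<^sub>R v) - s * q v"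
    if "s \<ge> 0" "t \<ge> 0" for s t
  proof -
    have "reduce_along q v (x + y) \<le> q ((x + s *\<^sub>R v) + (y + t *\<^sub>R v)) - (s + t) * q v"
      using reduce_along_le[OF q, of "s + t" v "x + y"] that by (simp add: algebra_simps)
    also have "\<dots> \<le> q (x + s *\<^sub>R v) + q (y + t *\<^sub>R v) - (s + t) * q v"
      using sublinear_add_le[OF q] by simp
    finally show ?thesis by (simp add: algebra_simps)
  qed
  then have "reduce_along q v (x + y) - (q (y + t *\<^sub>R v) - t * q v) \<le> reduce_along q v x"
    if "t \<ge> 0" for t
    using that by (intro reduce_along_greatest) auto
  then have "reduce_along q v (x + y) - reduce_along q v x \<le> reduce_along q v y"
    by (intro reduce_along_greatest) (auto simp: algebra_simps)
  then show ?thesis by simp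
qed

lemma reduce_along_scaleR:
  assumes q: "sublinear q" and t: "t > 0"
  shows "reduce_along q v (t *\<^sub>R x) = t * reduce_along q v x"
proof (rule antisym)
  have "reduce_along q v (t *\<^sub>R x) \<le> t * (q (x + s *\<^sub>R v) - s * q v)" if "s \<ge> 0" for s
  proof -
    have "t *\<^sub>R x + (t * s) *\<^sub>R v = t *\<^sub>R (x + s *\<^sub>R v)"
      by (simp add: algebra_simps)
    then have "reduce_along q v (t *\<^sub>R x) \<le> q (t *\<^sub>R (x + s *\<^sub>R v)) - (t * s) * q v"
      using reduce_along_le[OF q, of "t * s" v "t *\<^sub>R x"] that t by simp
    also have "\<dots> = t * (q (x + s *\<^sub>R v) - s * q v)"
      using sublinear_scaleR[OF q, of t "x + s *\<^sub>R v"] t by (simp add: right_diff_distrib)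
    finally show ?thesis .
  qed
  then have "reduce_along q v (t *\<^sub>R x) / t \<le> reduce_along q v x"
    using t by (intro reduce_along_greatest) (simp add: divide_simps mult.commute)
  then show "reduce_along q v (t *\<^sub>R x) \<le> t * reduce_along q v x"
    using t by (simp add: divide_simps mult.commute)
  have "t * reduce_along q v x \<le> q (t *\<^sub>R x + s *\<^sub>R v) - s * q v" if "s \<ge> 0" for s
  proof -
    have "t * reduce_along q v x \<le> t * (q (x + (s / t) *\<^sub>R v) - (s / t) * q v)"
      using reduce_along_le[OF q, of "s / t" v x] that t by simp
    also have "\<dots> = q (t *\<^sub>R (x + (s / t) *\<^sub>R v)) - s * q v"
      using sublinear_scaleR[OF q, of t "x + (s / t) *\<^sub>R v"] t by (simp add: right_diff_distrib)
    also have "t *\<^sub>R (x + (s / t) *\<^sub>R v) = t *\<^sub>R x + s *\<^sub>R v"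
      using t by (simp add: algebra_simps)
    finally show ?thesis .
  qed
  then show "t * reduce_along q v x \<le> reduce_along q v (t *\<^sub>R x)"
    by (intro reduce_along_greatest)
qed

lemma sublinear_reduce_along:
  assumes q: "sublinear q"
  shows "sublinear (reduce_along q v)"
proof -
  have "reduce_along q v 0 = 0"
  proof (rule antisym)
    show "reduce_along q v 0 \<le> 0"
      using reduce_along_le_self[OF q, of v 0] sublinear_zero[OF q] by simp
    show "0 \<le> reduce_along q v 0"
      by (rule reduce_along_greatest) (simp add: sublinear_scaleR[OF q])
  qed
  then have "reduce_along q v (t *\<^sub>R x) = t * reduce_along q v x" if "t \<ge> 0" for t x
    using that reduce_along_scaleR[OF q, of t] by (cases "t = 0") auto
  then show ?thesis
    unfolding sublinear_def using reduce_along_add_le[OF q] by blast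
qed

lemma sublinear_INF_chain:
  fixes C :: "('b::real_vector \<Rightarrow> real) set"
  assumes ne: "C \<noteq> {}" and sub: "\<And>q. q \<in> C \<Longrightarrow> sublinear q"
    and bdd: "\<And>x. bdd_below ((\<lambda>q. q x) ` C)"
    and chain: "\<And>a b. a \<in> C \<Longrightarrow> b \<in> C \<Longrightarrow> a \<le> b \<or> b \<le> a"
  shows "sublinear (\<lambda>x. INF q\<in>C. q x)" (is "sublinear ?u")
proof -
  have lower: "?u x \<le> q x" if "q \<in> C" for q x
    using bdd that by (rule cINF_lower)
  have greatest: "m \<le> ?u x" if "\<And>q. q \<in> C \<Longrightarrow> m \<le> q x" for m x
    using ne that by (rule cINF_greatest)
  have "?u (x + y) - q2 y \<le> q1 x" if q12: "q1 \<in> C" "q2 \<in> C" for x y q1 q2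
  proof -
    obtain q where "q \<in> C" "q x \<le> q1 x" "q y \<le> q2 y"
      using chain[OF q12] q12 by (auto simp: le_fun_def)
    moreover have "?u (x + y) \<le> q x + q y"
      using lower[OF \<open>q \<in> C\<close>, of "x + y"] sublinear_add_le[OF sub[OF \<open>q \<in> C\<close>], of x y]
      by linarith
    ultimately show ?thesis by linarith
  qed
  then have "?u (x + y) - q2 y \<le> ?u x" if "q2 \<in> C" for x y q2
    using that by (intro greatest)
  then have "?u (x + y) - ?u x \<le> ?u y" for x y
    by (intro greatest) (simp add: algebra_simps)
  moreover have "?u (t *\<^sub>R x) = t * ?u x" if t: "t > 0" for t x
  proof (rule antisym)
    have "?u (t *\<^sub>R x) / t \<le> q x" if "q \<in> C" for q
      using lower[OF that, of "t *\<^sub>R x"] sublinear_scaleR[OF sub[OF that], of t] t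
      by (simp add: divide_simps mult.commute)
    then have "?u (t *\<^sub>R x) / t \<le> ?u x" by (intro greatest)
    then show "?u (t *\<^sub>R x) \<le> t * ?u x" using t by (simp add: divide_simps mult.commute)
    have "t * ?u x \<le> q (t *\<^sub>R x)" if "q \<in> C" for q
      using lower[OF that, of x] sublinear_scaleR[OF sub[OF that], of t] t by simp
    then show "t * ?u x \<le> ?u (t *\<^sub>R x)" by (intro greatest)
  qed
  moreover have "?u 0 = 0"
    using ne sub by (simp add: sublinear_zero)
  ultimately show ?thesis
    unfolding sublinear_def by (metis add.commute diff_le_eq order_le_less scale_zero_left mult_zero_left)
qed

lemma linear_if_sublinear_odd:
  assumes q: "sublinear q" and odd: "\<And>x. q (- x) = - q x"
  shows "linear q"
proof (rule linearI)
  fix x y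
  show "q (x + y) = q x + q y"
    using sublinear_add_le[OF q, of x y] sublinear_add_le[OF q, of "- x" "- y"] odd[of x] odd[of y]
      odd[of "x + y"] by (simp add: add.commute)
next
  fix t x
  show "q (t *\<^sub>R x) = t *\<^sub>R q x"
  proof (cases "t \<ge> 0")
    case True then show ?thesis by (simp add: sublinear_scaleR[OF q])
  next
    case False
    then have "q ((- t) *\<^sub>R x) = (- t) * q x" by (intro sublinear_scaleR[OF q]) simp
    moreover have "q ((- t) *\<^sub>R x) = - q (t *\<^sub>R x)" using odd[of "t *\<^sub>R x"] by simp
    ultimately show ?thesis by simp
  qed
qed

definition norming_minorants :: "'b::real_normed_vector \<Rightarrow> ('b \<Rightarrow> real) set" where
  "norming_minorants y0 = {q. sublinear q \<and> q \<le> norm \<and> q (- y0) \<le> - norm y0}"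

lemma reduce_along_norming_minorants:
  assumes "q \<in> norming_minorants y0"
  shows "reduce_along q v \<in> norming_minorants y0"
proof -
  have q: "sublinear q" "q \<le> norm" "q (- y0) \<le> - norm y0"
    using assms unfolding norming_minorants_def by auto
  have "reduce_along q v x \<le> norm x" for x
    using order_trans[OF reduce_along_le_self[OF q(1)] le_funD[OF q(2)]] .
  moreover have "reduce_along q v (- y0) \<le> - norm y0"
    using order_trans[OF reduce_along_le_self[OF q(1)] q(3)] .
  ultimately show ?thesis
    unfolding norming_minorants_def using sublinear_reduce_along[OF q(1)] by (simp add: le_fun_def)
qed

lemma INF_chain_norming_minorants:
  assumes ne: "C \<noteq> {}" and C: "C \<subseteq> norming_minorants y0"
    and chain: "\<And>a b. a \<in> C \<Longrightarrow> b \<in> C \<Longrightarrow> a \<le> b \<or> b \<le> a"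
  shows "(\<lambda>x. INF q\<in>C. q x) \<in> norming_minorants y0" "\<And>q. q \<in> C \<Longrightarrow> (\<lambda>x. INF q\<in>C. q x) \<le> q"
proof -
  have sub: "\<And>q. q \<in> C \<Longrightarrow> sublinear q" and le: "\<And>q. q \<in> C \<Longrightarrow> q \<le> norm"
    and y0: "\<And>q. q \<in> C \<Longrightarrow> q (- y0) \<le> - norm y0"
    using C unfolding norming_minorants_def by auto
  have bdd: "bdd_below ((\<lambda>q. q x) ` C)" for x
  proof (rule bdd_belowI2[where m = "- norm x"])
    fix q assume "q \<in> C"
    then have "q (- x) \<le> norm (- x)" using le by (simp add: le_fun_def del: norm_minus_cancel)
    then show "- norm x \<le> q x" using sublinear_minus_le[OF sub[OF \<open>q \<in> C\<close>], of x] by simp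
  qed
  show lower: "(\<lambda>x. INF q\<in>C. q x) \<le> q" if "q \<in> C" for q
    using cINF_lower[OF bdd that] by (simp add: le_fun_def)
  obtain q where "q \<in> C" using ne by blast
  moreover have "sublinear (\<lambda>x. INF q\<in>C. q x)"
    using ne sub bdd chain by (rule sublinear_INF_chain)
  ultimately show "(\<lambda>x. INF q\<in>C. q x) \<in> norming_minorants y0"
    unfolding norming_minorants_def
    using order_trans[OF lower le] le_funD[OF lower, of q "- y0"] y0 by fastforce
qed

text \<open>By Zorn's lemma \<open>norming_minorants y0\<close> has a minimal element; minimality against
  \<open>reduce_along\<close> makes it odd.\<close>
lemma odd_norming_minorant:
  fixes y0 :: "'b::real_normed_vector"
  obtains m where "m \<in> norming_minorants y0" "\<And>x. m (- x) = - m x"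
proof -
  let ?A = "norming_minorants y0" and ?P = "\<lambda>q1 q2::'b \<Rightarrow> real. q2 \<le> q1"
  have po: "partial_order_on ?A (relation_of ?P ?A)"
    unfolding partial_order_on_def preorder_on_def refl_on_def trans_def antisym_def relation_of_def
    by auto
  have "reduce_along norm y0 \<in> ?A"
    unfolding norming_minorants_def le_fun_def
    using sublinear_reduce_along reduce_along_le_self reduce_along_minus_le sublinear_norm by auto
  moreover have "\<exists>u\<in>?A. \<forall>a\<in>C. ?P a u" if C: "C \<in> Chains (relation_of ?P ?A)" and "C \<noteq> {}" for C
  proof -
    have "C \<subseteq> ?A" "\<And>a b. a \<in> C \<Longrightarrow> b \<in> C \<Longrightarrow> a \<le> b \<or> b \<le> a"
      using C unfolding Chains_def relation_of_def by auto
    then show ?thesis using INF_chain_norming_minorants[OF \<open>C \<noteq> {}\<close>] by blast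
  qed
  ultimately obtain m where m: "m \<in> ?A" and min: "\<And>q. q \<in> ?A \<Longrightarrow> q \<le> m \<Longrightarrow> q = m"
    using predicate_Zorn[OF po] by (metis empty_iff)
  have "m (- x) = - m x" for x
  proof -
    have sm: "sublinear m" using m unfolding norming_minorants_def by blast
    have "reduce_along m x = m"
      using min reduce_along_norming_minorants[OF m] reduce_along_le_self[OF sm] by (auto simp: le_fun_def)
    then show ?thesis
      using reduce_along_minus_le[OF sm, of x] sublinear_minus_le[OF sm, of x] by simp
  qed
  with m show thesis by (rule that)
qed

lemma real_norming_functional:
  fixes y0 :: "'b::real_normed_vector"
  obtains \<psi> where "linear \<psi>" "\<psi> y0 = norm y0" "\<And>x. \<psi> x \<le> norm x"
proof -
  obtain m where m: "sublinear m" "m \<le> norm" "m (- y0) \<le> - norm y0" "\<And>x. m (- x) = - m x"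
    using odd_norming_minorant[of y0] unfolding norming_minorants_def by blast
  then have "m y0 = norm y0" using m(4)[of y0] le_funD[OF m(2), of y0] by simp
  with m show thesis by (intro that[of m] linear_if_sublinear_odd) (auto simp: le_fun_def)
qed

section \<open>Norming functionals on complex normed spaces\<close>

lemma complex_normed_structure_vector_space:
  "complex_normed_structure scY \<Longrightarrow> vector_space scY"
  unfolding complex_normed_structure_def by blast

lemma complex_normed_structure_of_real:
  "complex_normed_structure scY \<Longrightarrow> scY (complex_of_real r) y = r *\<^sub>R y"
  unfolding complex_normed_structure_def by blast

lemma complex_normed_structure_norm:
  "complex_normed_structure scY \<Longrightarrow> norm (scY c y) = cmod c * norm y"
  unfolding complex_normed_structure_def by blast

lemma complex_normed_structure_Re_Im:
  assumes cns: "complex_normed_structure scY"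
  shows "scY c y = Re c *\<^sub>R y + Im c *\<^sub>R scY \<i> y"
proof -
  interpret vector_space scY by (rule complex_normed_structure_vector_space[OF cns])
  have "scY (Complex a b) y = a *\<^sub>R y + b *\<^sub>R scY \<i> y" for a b
  proof -
    have "Complex a b = complex_of_real a + complex_of_real b * \<i>" by (simp add: complex_eq_iff)
    then have "scY (Complex a b) y = scY (complex_of_real a) y + scY (complex_of_real b) (scY \<i> y)"
      by (simp add: scale_left_distrib flip: scale_scale)
    then show ?thesis by (simp only: complex_normed_structure_of_real[OF cns])
  qed
  then show ?thesis by (metis complex.exhaust_sel)
qed

definition complexify :: "(complex \<Rightarrow> 'b \<Rightarrow> 'b) \<Rightarrow> ('b \<Rightarrow> real) \<Rightarrow> 'b \<Rightarrow> complex" where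
  "complexify scY \<psi> y = Complex (\<psi> y) (- \<psi> (scY \<i> y))"

lemma complexify_add:
  assumes "complex_normed_structure scY" "linear \<psi>"
  shows "complexify scY \<psi> (x + y) = complexify scY \<psi> x + complexify scY \<psi> y"
proof -
  interpret vector_space scY by (rule complex_normed_structure_vector_space[OF assms(1)])
  show ?thesis
    unfolding complexify_def by (simp add: scale_right_distrib linear_add[OF assms(2)] complex_eq_iff)
qed

lemma complexify_scale:
  assumes cns: "complex_normed_structure scY" and \<psi>: "linear \<psi>"
  shows "complexify scY \<psi> (scY c y) = c * complexify scY \<psi> y"
proof -
  interpret vector_space scY by (rule complex_normed_structure_vector_space[OF cns])
  have \<psi>_scale: "\<psi> (scY c y) = Re c * \<psi> y + Im c * \<psi> (scY \<i> y)" for c y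
    using arg_cong[OF complex_normed_structure_Re_Im[OF cns, of c y], of \<psi>]
    by (simp add: linear_add[OF \<psi>] linear_scale[OF \<psi>])
  have "\<psi> (scY \<i> (scY c y)) = - Im c * \<psi> y + Re c * \<psi> (scY \<i> y)"
    using \<psi>_scale[of "\<i> * c" y] by (simp add: scale_scale)
  then show ?thesis
    unfolding complexify_def using \<psi>_scale[of c y] by (simp add: complex_eq_iff algebra_simps)
qed

text \<open>Rotating \<open>y\<close> by the phase of \<open>complexify scY \<psi> y\<close> turns its modulus into a value of \<open>\<psi>\<close>.\<close>
lemma cmod_complexify_le:
  assumes cns: "complex_normed_structure scY" and \<psi>: "linear \<psi>" and le: "\<And>x. \<psi> x \<le> norm x"
  shows "cmod (complexify scY \<psi> y) \<le> norm y"
proof (cases "complexify scY \<psi> y = 0")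
  case False
  define w where "w = complexify scY \<psi> y"
  define u where "u = cnj w / complex_of_real (cmod w)"
  have "u * w = complex_of_real (cmod w)"
    using False unfolding u_def w_def
    by (simp add: complex_norm_square[symmetric] power2_eq_square field_simps)
  then have "complexify scY \<psi> (scY u y) = complex_of_real (cmod w)"
    using complexify_scale[OF cns \<psi>, of u y] unfolding w_def by simp
  then have "cmod w = \<psi> (scY u y)"
    unfolding complexify_def by (simp add: complex_eq_iff)
  also have "\<dots> \<le> norm (scY u y)" by (rule le)
  also have "\<dots> = norm y"
    using False complex_normed_structure_norm[OF cns] unfolding u_def w_def by (simp add: norm_divide)
  finally show ?thesis unfolding w_def .
qed simp

lemma complex_norming_functional:
  assumes cns: "complex_normed_structure scY"
  obtains \<phi> where "cdual scY \<phi>" "\<phi> y0 = complex_of_real (norm y0)" "\<And>y. cmod (\<phi> y) \<le> norm y"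
proof -
  obtain \<psi> where \<psi>: "linear \<psi>" "\<psi> y0 = norm y0" "\<And>x. \<psi> x \<le> norm x"
    using real_norming_functional[of y0] by blast
  let ?\<phi> = "complexify scY \<psi>"
  have bound: "cmod (?\<phi> y) \<le> norm y" for y
    by (rule cmod_complexify_le[OF cns \<psi>(1,3)])
  have "cdual scY ?\<phi>"
    unfolding cdual_def using complexify_add[OF cns \<psi>(1)] complexify_scale[OF cns \<psi>(1)] bound
    by (metis mult_1)
  moreover have "?\<phi> y0 = complex_of_real (norm y0)"
  proof -
    have "Re (?\<phi> y0) = norm y0" using \<psi>(2) by (simp add: complexify_def)
    moreover have "Re (?\<phi> y0) ^ 2 + Im (?\<phi> y0) ^ 2 \<le> (norm y0) ^ 2"
      using bound[of y0] by (simp add: cmod_power2[symmetric] power_mono)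
    ultimately show ?thesis by (simp add: complex_eq_iff)
  qed
  ultimately show thesis using that bound by blast
qed

lemma cdual_add: "cdual scY \<phi> \<Longrightarrow> \<phi> (x + y) = \<phi> x + \<phi> y"
  unfolding cdual_def by blast

lemma cdual_diff: "cdual scY \<phi> \<Longrightarrow> \<phi> (x - y) = \<phi> x - \<phi> y"
  using cdual_add[of scY \<phi> "x - y" y] by simp

lemma cdual_scaleR:
  assumes "complex_normed_structure scY" "cdual scY \<phi>"
  shows "\<phi> (r *\<^sub>R x) = complex_of_real r * \<phi> x"
proof -
  have "\<phi> (scY (complex_of_real r) x) = complex_of_real r * \<phi> x"
    using assms(2) unfolding cdual_def by blast
  then show ?thesis by (simp only: complex_normed_structure_of_real[OF assms(1)])
qed

lemma strictly_convex_norming_unique: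
  fixes y y0 :: "'b::real_normed_vector"
  assumes SC: "strictly_convex TYPE('b)" and cns: "complex_normed_structure scY"
    and \<phi>: "cdual scY \<phi>" "\<And>y. cmod (\<phi> y) \<le> norm y"
    and le: "norm y \<le> M" and eq: "norm y0 = M"
    and attained: "\<phi> y = complex_of_real M" "\<phi> y0 = complex_of_real M"
  shows "y = y0"
proof (rule ccontr)
  assume ne: "y \<noteq> y0"
  then have M: "M > 0" using le eq \<phi>(2)[of y] attained by auto
  define a where "a = (1 / M) *\<^sub>R y"
  define b where "b = (1 / M) *\<^sub>R y0"
  have "norm y = M" using \<phi>(2)[of y] attained(1) le M by simp
  then have "norm a = 1" "norm b = 1" "a \<noteq> b" unfolding a_def b_def using eq ne M by auto
  then have lt: "norm ((1 / 2) *\<^sub>R (a + b)) < 1" using SC unfolding strictly_convex_def by blast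
  have "\<phi> ((1 / 2) *\<^sub>R (a + b)) = 1"
    using M attained unfolding a_def b_def
    by (simp add: cdual_scaleR[OF cns \<phi>(1)] cdual_add[OF \<phi>(1)] field_simps)
  then show False using \<phi>(2)[of "(1 / 2) *\<^sub>R (a + b)"] lt by simp
qed

section \<open>Linewise holomorphic functions of two complex variables\<close>

definition linewise_holomorphic :: "(complex \<Rightarrow> complex \<Rightarrow> complex) \<Rightarrow> (complex \<times> complex) set \<Rightarrow> bool" where
  "linewise_holomorphic G W \<longleftrightarrow>
     (\<forall>z1 z2 d1 d2. (z1, z2) \<in> W \<longrightarrow> (\<exists>r>0. (\<lambda>t. G (z1 + t * d1) (z2 + t * d2)) holomorphic_on ball 0 r))"

definition const_near_on_lines :: "(complex \<Rightarrow> complex \<Rightarrow> complex) \<Rightarrow> complex \<Rightarrow> complex \<Rightarrow> complex \<Rightarrow> bool" where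
  "const_near_on_lines G K a1 a2 \<longleftrightarrow>
     (\<forall>d1 d2. \<exists>\<epsilon>>0. \<forall>t. cmod t < \<epsilon> \<longrightarrow> G (a1 + t * d1) (a2 + t * d2) = K)"

lemma linewise_holomorphic_subset:
  "linewise_holomorphic G W \<Longrightarrow> V \<subseteq> W \<Longrightarrow> linewise_holomorphic G V"
  unfolding linewise_holomorphic_def by blast

lemma holomorphic_on_line:
  assumes "linewise_holomorphic G W"
  shows "(\<lambda>t. G (a1 + t * d1) (a2 + t * d2)) holomorphic_on {t. (a1 + t * d1, a2 + t * d2) \<in> W}"
  unfolding holomorphic_on_def
proof
  fix t assume "t \<in> {t. (a1 + t * d1, a2 + t * d2) \<in> W}"
  then obtain r where "r > 0"
    and hol: "(\<lambda>s. G (a1 + t * d1 + s * d1) (a2 + t * d2 + s * d2)) holomorphic_on ball 0 r"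
    using assms unfolding linewise_holomorphic_def by blast
  then have "(\<lambda>s. G (a1 + t * d1 + s * d1) (a2 + t * d2 + s * d2)) field_differentiable at (t - t)"
    by (intro holomorphic_on_imp_differentiable_at[OF hol]) auto
  then have "((\<lambda>s. G (a1 + t * d1 + s * d1) (a2 + t * d2 + s * d2)) \<circ> (\<lambda>s. s - t))
      field_differentiable at t"
    by (intro field_differentiable_compose) (auto intro!: derivative_intros simp: field_differentiable_def)
  moreover have "(\<lambda>s. G (a1 + t * d1 + s * d1) (a2 + t * d2 + s * d2)) \<circ> (\<lambda>s. s - t)
      = (\<lambda>t. G (a1 + t * d1) (a2 + t * d2))"
    by (auto simp: algebra_simps)
  ultimately show "(\<lambda>t. G (a1 + t * d1) (a2 + t * d2)) field_differentiable at t
      within {t. (a1 + t * d1, a2 + t * d2) \<in> W}"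
    by (simp add: field_differentiable_at_within)
qed

lemma open_line_preimage:
  assumes "open W"
  shows "open {t::complex. (a1 + t * d1, a2 + t * d2) \<in> W}"
proof -
  have "open ((\<lambda>t. (a1 + t * d1, a2 + t * d2)) -` W)"
    using assms by (intro continuous_open_vimage) (auto intro!: continuous_intros)
  then show ?thesis by (simp add: vimage_def)
qed

lemma convex_line_preimage:
  assumes "convex W"
  shows "convex {t::complex. (a1 + t * d1, a2 + t * d2) \<in> W}"
proof (rule convexI)
  fix x y :: complex and u v :: real
  assume "x \<in> {t. (a1 + t * d1, a2 + t * d2) \<in> W}" "y \<in> {t. (a1 + t * d1, a2 + t * d2) \<in> W}"
    and "0 \<le> u" "0 \<le> v" "u + v = 1"
  moreover have "(a1 + (u *\<^sub>R x + v *\<^sub>R y) * d1, a2 + (u *\<^sub>R x + v *\<^sub>R y) * d2)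
      = u *\<^sub>R (a1 + x * d1, a2 + x * d2) + v *\<^sub>R (a1 + y * d1, a2 + y * d2)"
  proof -
    have v: "v = 1 - u" using \<open>u + v = 1\<close> by simp
    show ?thesis unfolding v by (simp add: prod_eq_iff scaleR_conv_of_real of_real_diff) algebra
  qed
  ultimately show "u *\<^sub>R x + v *\<^sub>R y \<in> {t. (a1 + t * d1, a2 + t * d2) \<in> W}"
    using convexD[OF assms] by fastforce
qed

text \<open>Identity principle: on a convex open \<open>W \<subseteq> \<complex>\<^sup>2\<close> the complex line through \<open>a\<close> and any
  \<open>z \<in> W\<close> meets \<open>W\<close> in a convex, hence connected, open set on which \<open>G\<close> is holomorphic.\<close>
lemma const_on_convex_if_const_near_on_lines:
  assumes W: "convex W" "open W" and hol: "linewise_holomorphic G W"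
    and a: "(a1, a2) \<in> W" and const: "const_near_on_lines G K a1 a2"
    and z: "(z1, z2) \<in> W"
  shows "G z1 z2 = K"
proof -
  define T where "T = {t. (a1 + t * (z1 - a1), a2 + t * (z2 - a2)) \<in> W}"
  define h where "h t = G (a1 + t * (z1 - a1)) (a2 + t * (z2 - a2)) - K" for t
  have T: "open T" "connected T" "0 \<in> T" "1 \<in> T"
    unfolding T_def using a z
    by (simp_all add: open_line_preimage[OF W(2)] convex_connected convex_line_preimage[OF W(1)])
  have hol_h: "h holomorphic_on T"
    unfolding h_def T_def by (intro holomorphic_on_diff holomorphic_on_const holomorphic_on_line[OF hol])
  obtain \<epsilon> where "\<epsilon> > 0" and h0: "\<And>t. cmod t < \<epsilon> \<Longrightarrow> h t = 0"
    using const[unfolded const_near_on_lines_def, rule_format, of "z1 - a1" "z2 - a2"]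
    unfolding h_def by auto
  obtain e where "e > 0" "ball 0 e \<subseteq> T"
    using T(1,3) open_contains_ball by blast
  have "h 1 = 0"
  proof (rule analytic_continuation[OF hol_h T(1,2)])
    show "ball 0 (min e \<epsilon>) \<subseteq> T" using \<open>ball 0 e \<subseteq> T\<close> by auto
    show "(0::complex) islimpt ball 0 (min e \<epsilon>)"
      using \<open>e > 0\<close> \<open>\<epsilon> > 0\<close> by (simp add: islimpt_ball)
    show "h t = 0" if "t \<in> ball 0 (min e \<epsilon>)" for t using that h0 by simp
  qed (use T in simp_all)
  then show ?thesis unfolding h_def by simp
qed

lemma const_near_on_lines_if_const_near:
  assumes "\<delta> > 0" and const: "\<And>z1 z2. z1 \<in> ball a1 \<delta> \<Longrightarrow> z2 \<in> ball a2 \<delta> \<Longrightarrow> G z1 z2 = K"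
  shows "const_near_on_lines G K a1 a2"
  unfolding const_near_on_lines_def
proof (intro allI)
  fix d1 d2
  have "open {t. (a1 + t * d1, a2 + t * d2) \<in> ball a1 \<delta> \<times> ball a2 \<delta>}"
    by (intro open_line_preimage open_Times open_ball)
  moreover have "0 \<in> {t. (a1 + t * d1, a2 + t * d2) \<in> ball a1 \<delta> \<times> ball a2 \<delta>}"
    using assms by simp
  ultimately obtain \<epsilon> where "\<epsilon> > 0" "ball 0 \<epsilon> \<subseteq> {t. (a1 + t * d1, a2 + t * d2) \<in> ball a1 \<delta> \<times> ball a2 \<delta>}"
    by (meson open_contains_ball)
  then show "\<exists>\<epsilon>>0. \<forall>t. cmod t < \<epsilon> \<longrightarrow> G (a1 + t * d1) (a2 + t * d2) = K"
    using const by (intro exI[of _ \<epsilon>]) auto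
qed

lemma const_on_bidisc:
  assumes hol: "linewise_holomorphic G (ball c e \<times> ball 0 e)"
    and x: "x \<in> ball c e" "const_near_on_lines G K x 0"
    and z: "z1 \<in> ball c e" "z2 \<in> ball 0 e"
  shows "G z1 z2 = K"
proof (rule const_on_convex_if_const_near_on_lines[OF _ _ hol])
  show "convex (ball c e \<times> ball (0::complex) e)" "open (ball c e \<times> ball (0::complex) e)"
    by (simp_all add: convex_Times open_Times)
  have "e > 0" using z(2) norm_ge_zero[of z2] by (simp del: norm_ge_zero)
  then show "(x, 0) \<in> ball c e \<times> ball 0 e" using x(1) by simp
qed (use x z in simp_all)

text \<open>Continuation along \<open>[0, 1] \<times> {0}\<close>: constancy on a bidisc around \<open>(s, 0)\<close> inside \<open>W\<close> spreads to
  the bidisc of every nearby point, since \<open>G\<close> is constant near lines through some point of it.\<close>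
lemma const_near_along_unit_segment:
  assumes hol: "linewise_holomorphic G W"
    and boxes: "\<And>s. s \<in> {0..1} \<Longrightarrow> \<exists>e>0. ball (complex_of_real s) e \<times> ball 0 e \<subseteq> W"
    and const0: "const_near_on_lines G K 0 0"
  shows "\<exists>\<delta>>0. \<forall>z1\<in>ball 1 \<delta>. \<forall>z2\<in>ball 0 \<delta>. G z1 z2 = K"
proof -
  obtain E where E: "\<And>s. s \<in> {0..1} \<Longrightarrow> E s > 0 \<and> ball (complex_of_real s) (E s) \<times> ball 0 (E s) \<subseteq> W"
    using boxes by metis
  define P where "P s \<longleftrightarrow> (\<exists>\<delta>>0. \<forall>z1\<in>ball (complex_of_real s) \<delta>. \<forall>z2\<in>ball 0 \<delta>. G z1 z2 = K)" for s
  have box_const: "G z1 z2 = K"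
    if s: "s \<in> {0..1}" and "x \<in> ball (complex_of_real s) (E s)" "const_near_on_lines G K x 0"
      "z1 \<in> ball (complex_of_real s) (E s)" "z2 \<in> ball 0 (E s)" for s x z1 z2
    using E[OF s] that
    by (intro const_on_bidisc[of G "complex_of_real s" "E s" x K] linewise_holomorphic_subset[OF hol])
      simp_all
  have "P 1"
  proof (rule connected_induction_simple[of "{0..1}" 0 1 P])
    have "E 0 > 0" using E[of 0] by simp
    then show "P 0"
      unfolding P_def using box_const[of 0 0] const0 by (intro exI[of _ "E 0"]) simp
  next
    fix s :: real assume s: "s \<in> {0..1}"
    then have Es: "E s > 0" using E by blast
    have "P y" if "x \<in> ball s (E s / 2)" "y \<in> ball s (E s / 2)" "P x" for x y
    proof -
      have "const_near_on_lines G K (complex_of_real x) 0"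
        using \<open>P x\<close> unfolding P_def by (auto intro: const_near_on_lines_if_const_near)
      moreover have "complex_of_real x \<in> ball (complex_of_real s) (E s)"
        using \<open>x \<in> ball s (E s / 2)\<close> Es by simp
      ultimately have const: "G z1 z2 = K"
        if "z1 \<in> ball (complex_of_real s) (E s)" "z2 \<in> ball 0 (E s)" for z1 z2
        using box_const[OF s _ _ that] by blast
      have "ball (complex_of_real y) (E s / 2) \<subseteq> ball (complex_of_real s) (E s)"
      proof
        fix z assume "z \<in> ball (complex_of_real y) (E s / 2)"
        moreover have "dist (complex_of_real s) (complex_of_real y) < E s / 2"
          using \<open>y \<in> ball s (E s / 2)\<close> by simp
        ultimately show "z \<in> ball (complex_of_real s) (E s)"
          using dist_triangle[of "complex_of_real s" z "complex_of_real y"] by simp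
      qed
      moreover have "ball 0 (E s / 2) \<subseteq> ball (0::complex) (E s)"
        using Es by (intro subset_ball) simp
      ultimately have "\<forall>z1\<in>ball (complex_of_real y) (E s / 2). \<forall>z2\<in>ball 0 (E s / 2). G z1 z2 = K"
        using const by blast
      then show ?thesis
        unfolding P_def using Es by (intro exI[of _ "E s / 2"]) simp
    qed
    moreover have "openin (top_of_set {0..1}) ({0..1} \<inter> ball s (E s / 2))"
      by (intro openin_open_Int open_ball)
    moreover have "s \<in> ball s (E s / 2)"
      using Es by simp
    ultimately show "\<exists>T. openin (top_of_set {0..1}) T \<and> s \<in> T \<and> (\<forall>x\<in>T. \<forall>y\<in>T. P x \<longrightarrow> P y)"
      using s Es by (intro exI[of _ "{0..1} \<inter> ball s (E s / 2)"]) blast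
  qed simp_all
  then show ?thesis unfolding P_def by simp
qed

section \<open>Complex lines and planes in \<open>X\<close>\<close>

locale complex_vector_space = vector_space scX for scX :: "complex \<Rightarrow> 'a::ab_group_add \<Rightarrow> 'a"
begin

lemma d_open_line:
  assumes A: "d_open scX d A" and "1 \<le> d" and v: "v \<noteq> 0" and az: "a + scX z v \<in> A"
  shows "\<exists>\<epsilon>>0. \<forall>z'\<in>ball z \<epsilon>. a + scX z' v \<in> A"
proof -
  have indep: "inj_on (\<lambda>_::nat. v) {..<1} \<and> lin_indep scX ((\<lambda>_::nat. v) ` {..<1})"
    using v by (simp add: lin_indep_def lessThan_Suc One_nat_def)
  have "a + (\<Sum>i<1. scX ((\<lambda>_. z) i) ((\<lambda>_::nat. v) i)) \<in> A"
    using az by (simp add: lessThan_Suc One_nat_def)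
  from A[unfolded d_open_def, rule_format, of 1, OF _ indep this]
  obtain \<epsilon> where "\<epsilon> > 0"
    and \<epsilon>: "\<And>c'. cmod (c' (0::nat) - z) < \<epsilon> \<Longrightarrow> a + scX (c' 0) v \<in> A"
    using \<open>1 \<le> d\<close> by (auto simp: lessThan_Suc One_nat_def)
  have "a + scX z' v \<in> A" if "z' \<in> ball z \<epsilon>" for z'
    using \<epsilon>[of "\<lambda>_. z'"] that by (simp add: dist_norm norm_minus_commute)
  then show ?thesis using \<open>\<epsilon> > 0\<close> by blast
qed

lemma d_open_plane:
  assumes A: "d_open scX 2 A" and uw: "u \<noteq> w" "lin_indep scX {u, w}"
    and az: "a + scX z1 u + scX z2 w \<in> A"
  shows "\<exists>\<epsilon>>0. \<forall>z1'\<in>ball z1 \<epsilon>. \<forall>z2'\<in>ball z2 \<epsilon>. a + scX z1' u + scX z2' w \<in> A"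
proof -
  define v where "v i = (if i = 0 then u else w)" for i :: nat
  define c where "c z1 z2 i = (if i = 0 then z1 else z2)" for z1 z2 :: complex and i :: nat
  have sum: "(\<Sum>i<2. scX (c z1 z2 i) (v i)) = scX z1 u + scX z2 w" for z1 z2
    by (simp add: c_def v_def numeral_2_eq_2)
  have indep: "inj_on v {..<2} \<and> lin_indep scX (v ` {..<2})"
    using uw unfolding v_def by (simp add: numeral_2_eq_2 lessThan_Suc insert_commute)
  have "a + (\<Sum>i<2. scX (c z1 z2 i) (v i)) \<in> A"
    using az by (simp add: sum add.assoc)
  from A[unfolded d_open_def, rule_format, of 2, OF _ indep this]
  obtain \<epsilon> where "\<epsilon> > 0"
    and \<epsilon>: "\<And>c'. (\<forall>i<2. cmod (c' i - c z1 z2 i) < \<epsilon>) \<Longrightarrow> a + (\<Sum>i<2. scX (c' i) (v i)) \<in> A"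
    by auto
  have "a + scX z1' u + scX z2' w \<in> A" if "z1' \<in> ball z1 \<epsilon>" "z2' \<in> ball z2 \<epsilon>" for z1' z2'
  proof -
    have "\<forall>i<2. cmod (c z1' z2' i - c z1 z2 i) < \<epsilon>"
      using that by (simp add: less_2_cases_iff c_def dist_norm norm_minus_commute)
    from \<epsilon>[OF this] show ?thesis by (simp add: sum add.assoc)
  qed
  then show ?thesis using \<open>\<epsilon> > 0\<close> by blast
qed

lemma multiple_if_not_independent_pair:
  assumes "u \<noteq> 0" and "\<not> (u \<noteq> v \<and> lin_indep scX {u, v})"
  obtains l where "v = scX l u"
proof (cases "u = v")
  case True
  then show thesis using that[of 1] by simp
next
  case False
  then have "dependent (insert v {u})" using assms(2) unfolding lin_indep_def by (simp add: insert_commute)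
  then have "v \<in> span {u}" using False \<open>u \<noteq> 0\<close> independent_insert[of v "{u}"] by auto
  then show thesis using that unfolding span_singleton by auto
qed

lemma exists_independent_pair:
  assumes "dim_ge2 scX" and "u \<noteq> 0"
  obtains w where "u \<noteq> w" "lin_indep scX {u, w}"
proof (rule ccontr)
  assume no: "\<not> thesis"
  obtain b1 b2 where b: "b1 \<noteq> b2" "independent {b1, b2}"
    using assms(1) unfolding dim_ge2_def lin_indep_def by (auto simp: card_2_iff)
  have "\<not> (u \<noteq> w \<and> lin_indep scX {u, w})" for w
    using no that by blast
  then obtain l1 l2 where "b1 = scX l1 u" "b2 = scX l2 u"
    using multiple_if_not_independent_pair[OF \<open>u \<noteq> 0\<close>] by metis
  moreover have "b1 \<noteq> 0" using b dependent_zero by blast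
  ultimately have "b2 = scX (l2 / l1) b1" by auto
  then have "b2 \<in> span {b1}" unfolding span_singleton by auto
  then show False using b independent_insert[of b2 "{b1}"] by (auto simp: insert_commute)
qed

end

section \<open>Gateaux holomorphic maps\<close>

locale gateaux_holomorphic_map = complex_vector_space scX
  for scX :: "complex \<Rightarrow> 'a::ab_group_add \<Rightarrow> 'a"
    and scY :: "complex \<Rightarrow> 'b::real_normed_vector \<Rightarrow> 'b"
    and \<Omega> :: "'a set" and f :: "'a \<Rightarrow> 'b" +
  assumes complex_Y: "complex_normed_structure scY"
    and open_\<Omega>: "d_open scX 2 \<Omega>"
    and holomorphic_f: "gateaux_holomorphic scX scY \<Omega> f"
begin

lemma holomorphic_on_complex_line:
  assumes "cdual scY \<phi>" "a \<in> \<Omega>"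
  obtains r where "r > 0" "(\<lambda>z. \<phi> (f (a + scX z v))) holomorphic_on ball 0 r"
  using holomorphic_f assms unfolding gateaux_holomorphic_def by blast

lemma const_near_local_max:
  assumes SC: "strictly_convex TYPE('b)" and c: "c \<in> \<Omega>" and max: "tau1_local_max scX \<Omega> f c"
  shows "\<exists>\<epsilon>>0. \<forall>z. cmod z < \<epsilon> \<longrightarrow> f (c + scX z v) = f c"
proof (cases "v = 0")
  case False
  obtain U where U: "d_open scX 1 U" "c \<in> U" "\<And>x. x \<in> U \<inter> \<Omega> \<Longrightarrow> norm (f x) \<le> norm (f c)"
    using max unfolding tau1_local_max_def by blast
  obtain e1 where "e1 > 0" "\<forall>z\<in>ball 0 e1. c + scX z v \<in> U"
    using d_open_line[OF U(1) _ False, of c 0] U(2) by auto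
  moreover obtain e2 where "e2 > 0" "\<forall>z\<in>ball 0 e2. c + scX z v \<in> \<Omega>"
    using d_open_line[OF open_\<Omega> _ False, of c 0] c by auto
  moreover obtain \<phi> where \<phi>: "cdual scY \<phi>" "\<phi> (f c) = complex_of_real (norm (f c))"
    "\<And>y. cmod (\<phi> y) \<le> norm y"
    using complex_norming_functional[OF complex_Y] by blast
  moreover obtain r where "r > 0" "(\<lambda>z. \<phi> (f (c + scX z v))) holomorphic_on ball 0 r"
    using holomorphic_on_complex_line[OF \<phi>(1) c] by blast
  ultimately obtain e where "e > 0" and in_U\<Omega>: "\<And>z. z \<in> ball 0 e \<Longrightarrow> c + scX z v \<in> U \<inter> \<Omega>"
    and hol: "(\<lambda>z. \<phi> (f (c + scX z v))) holomorphic_on ball 0 e"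
    by (intro that[of "min (min e1 e2) r"]) (auto intro: holomorphic_on_subset)
  have le: "norm (f (c + scX z v)) \<le> norm (f c)" if "z \<in> ball 0 e" for z
    using U(3) in_U\<Omega>[OF that] .
  have "(\<lambda>z. \<phi> (f (c + scX z v))) constant_on ball 0 e"
  proof (rule maximum_modulus_principle[OF hol, where U = "ball 0 e" and \<xi> = 0])
    show "cmod (\<phi> (f (c + scX z v))) \<le> cmod (\<phi> (f (c + scX 0 v)))" if "z \<in> ball 0 e" for z
      using \<phi>(3)[of "f (c + scX z v)"] le[OF that] \<phi>(2) by simp
  qed (use \<open>e > 0\<close> in auto)
  then have "\<phi> (f (c + scX z v)) = complex_of_real (norm (f c))" if "z \<in> ball 0 e" for z
    using that \<open>e > 0\<close> \<phi>(2) unfolding constant_on_def by (metis centre_in_ball add_0_right scale_zero_left)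
  then have "f (c + scX z v) = f c" if "z \<in> ball 0 e" for z
    using strictly_convex_norming_unique[OF SC complex_Y \<phi>(1,3) le[OF that]] \<phi>(2) that by blast
  then show ?thesis using \<open>e > 0\<close> by auto
qed (auto intro: exI[of _ 1])

definition locally_const_on_lines :: "('b \<Rightarrow> complex) \<Rightarrow> complex \<Rightarrow> 'a \<Rightarrow> bool" where
  "locally_const_on_lines \<phi> K p \<longleftrightarrow>
     p \<in> \<Omega> \<and> (\<forall>v. \<exists>\<epsilon>>0. \<forall>z. cmod z < \<epsilon> \<longrightarrow> \<phi> (f (p + scX z v)) = K)"

lemma plane_line_eq:
  "p + scX (z1 + t * d1) u + scX (z2 + t * d2) w = (p + scX z1 u + scX z2 w) + scX t (scX d1 u + scX d2 w)"
  by (simp add: scale_left_distrib scale_right_distrib scale_scale add_ac)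

lemma segment_point_eq:
  "scX (complex_of_real (1 - t)) p + scX (complex_of_real t) q = p + scX (complex_of_real t) (q - p)"
  by (simp add: scale_left_diff_distrib scale_right_diff_distrib)

text \<open>In the plane chart \<open>(z1, z2) \<mapsto> p + z1 u + z2 w\<close>, \<open>\<phi> \<circ> f\<close> is holomorphic on complex lines and
  the segment from \<open>p\<close> to \<open>p + u\<close> becomes \<open>[0, 1] \<times> {0}\<close>.\<close>
lemma const_near_segment_end_in_plane:
  assumes \<phi>: "cdual scY \<phi>" and p: "locally_const_on_lines \<phi> K p"
    and uw: "u \<noteq> w" "lin_indep scX {u, w}"
    and segment: "\<And>s. s \<in> {0..1} \<Longrightarrow> p + scX (complex_of_real s) u \<in> \<Omega>"
  shows "\<exists>\<delta>>0. \<forall>z1\<in>ball 1 \<delta>. \<forall>z2\<in>ball 0 \<delta>. \<phi> (f (p + scX z1 u + scX z2 w)) = K"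
proof (rule const_near_along_unit_segment)
  let ?W = "{(z1, z2). p + scX z1 u + scX z2 w \<in> \<Omega>}"
  show "linewise_holomorphic (\<lambda>z1 z2. \<phi> (f (p + scX z1 u + scX z2 w))) ?W"
    unfolding linewise_holomorphic_def plane_line_eq
    using holomorphic_on_complex_line[OF \<phi>] by blast
  show "\<exists>e>0. ball (complex_of_real s) e \<times> ball 0 e \<subseteq> ?W" if "s \<in> {0..1}" for s
    using d_open_plane[OF open_\<Omega> uw, of p "complex_of_real s" 0] segment[OF that] by fastforce
  show "const_near_on_lines (\<lambda>z1 z2. \<phi> (f (p + scX z1 u + scX z2 w))) K 0 0"
    unfolding const_near_on_lines_def
  proof (intro allI)
    fix d1 d2
    obtain \<epsilon> where "\<epsilon> > 0" "\<forall>t. cmod t < \<epsilon> \<longrightarrow> \<phi> (f (p + scX t (scX d1 u + scX d2 w))) = K"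
      using p unfolding locally_const_on_lines_def by blast
    moreover have "p + scX (0 + t * d1) u + scX (0 + t * d2) w = p + scX t (scX d1 u + scX d2 w)" for t
      using plane_line_eq[of p 0 t d1 u 0 d2 w] by simp
    ultimately show "\<exists>\<epsilon>>0. \<forall>t. cmod t < \<epsilon> \<longrightarrow> \<phi> (f (p + scX (0 + t * d1) u + scX (0 + t * d2) w)) = K"
      by (auto simp: add.assoc)
  qed
qed

lemma locally_const_on_lines_along_segment:
  assumes \<phi>: "cdual scY \<phi>" and dim: "dim_ge2 scX"
    and p: "locally_const_on_lines \<phi> K p" and seg: "seg scX p q \<subseteq> \<Omega>"
  shows "locally_const_on_lines \<phi> K q"
proof (cases "q = p")
  case False
  define u where "u = q - p"
  have "u \<noteq> 0" and q: "q = p + scX 1 u" using False unfolding u_def by auto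
  have segment: "p + scX (complex_of_real s) u \<in> \<Omega>" if "s \<in> {0..1}" for s
    using seg that unfolding seg_def u_def segment_point_eq by auto
  have end_const: "\<exists>\<delta>>0. \<forall>z1\<in>ball 1 \<delta>. \<forall>z2\<in>ball 0 \<delta>. \<phi> (f (p + scX z1 u + scX z2 w)) = K"
    if "u \<noteq> w" "lin_indep scX {u, w}" for w
    using const_near_segment_end_in_plane[OF \<phi> p that segment] .
  have "\<exists>\<epsilon>>0. \<forall>z. cmod z < \<epsilon> \<longrightarrow> \<phi> (f (q + scX z v)) = K" for v
  proof (cases "u \<noteq> v \<and> lin_indep scX {u, v}")
    case True
    then obtain \<delta> where "\<delta> > 0" and \<delta>: "\<forall>z1\<in>ball 1 \<delta>. \<forall>z2\<in>ball 0 \<delta>. \<phi> (f (p + scX z1 u + scX z2 v)) = K"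
      using end_const by blast
    have "\<phi> (f (q + scX z v)) = K" if "cmod z < \<delta>" for z
      using \<delta>[rule_format, of 1 z] that \<open>\<delta> > 0\<close> unfolding q by simp
    then show ?thesis using \<open>\<delta> > 0\<close> by blast
  next
    case False
    then obtain l where v: "v = scX l u"
      using multiple_if_not_independent_pair[OF \<open>u \<noteq> 0\<close>] by blast
    obtain w where "u \<noteq> w" "lin_indep scX {u, w}"
      using exists_independent_pair[OF dim \<open>u \<noteq> 0\<close>] by blast
    then obtain \<delta> where "\<delta> > 0" and \<delta>: "\<forall>z1\<in>ball 1 \<delta>. \<forall>z2\<in>ball 0 \<delta>. \<phi> (f (p + scX z1 u + scX z2 w)) = K"
      using end_const by blast
    have "\<phi> (f (q + scX z v)) = K" if z: "cmod z < \<delta> / (cmod l + 1)" for z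
    proof -
      have "cmod z * cmod l \<le> cmod z * (cmod l + 1)" by (simp add: mult_left_mono)
      also have "\<dots> < \<delta>" using z by (simp add: pos_less_divide_eq add_nonneg_pos)
      finally have "1 + z * l \<in> ball 1 \<delta>" by (simp add: dist_norm norm_mult)
      moreover have "q + scX z v = p + scX (1 + z * l) u + scX 0 w"
        unfolding q v by (simp add: scale_left_distrib scale_scale add.assoc)
      ultimately show ?thesis using \<delta>[rule_format, of "1 + z * l" 0] \<open>\<delta> > 0\<close> by simp
    qed
    then show ?thesis using \<open>\<delta> > 0\<close> by (intro exI[of _ "\<delta> / (cmod l + 1)"]) (simp add: add_nonneg_pos)
  qed
  moreover have "q \<in> \<Omega>" using segment[of 1] q by simp
  ultimately show ?thesis unfolding locally_const_on_lines_def by blast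
qed (use p in simp)

lemma locally_const_on_lines_polygon:
  assumes \<phi>: "cdual scY \<phi>" and dim: "dim_ge2 scX" and pc: "polygonally_connected scX \<Omega>"
    and c: "locally_const_on_lines \<phi> K c" and x: "x \<in> \<Omega>"
  shows "locally_const_on_lines \<phi> K x"
proof -
  have "c \<in> \<Omega>" using c unfolding locally_const_on_lines_def by blast
  then obtain ps where ps: "ps \<noteq> []" "hd ps = c" "last ps = x"
    and segs: "\<And>i. Suc i < length ps \<Longrightarrow> seg scX (ps ! i) (ps ! Suc i) \<subseteq> \<Omega>"
    using pc x unfolding polygonally_connected_def by blast
  have "i < length ps \<longrightarrow> locally_const_on_lines \<phi> K (ps ! i)" for i
  proof (induction i)
    case 0
    then show ?case using c ps by (simp add: hd_conv_nth)
  next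
    case (Suc i)
    then show ?case using locally_const_on_lines_along_segment[OF \<phi> dim _ segs[of i]] by simp
  qed
  then have "locally_const_on_lines \<phi> K (ps ! (length ps - 1))" using ps(1) by simp
  then show ?thesis using ps by (simp add: last_conv_nth)
qed

theorem constant_if_local_max:
  assumes dim: "dim_ge2 scX" and SC: "strictly_convex TYPE('b)" and pc: "polygonally_connected scX \<Omega>"
    and c: "c \<in> \<Omega>" and max: "tau1_local_max scX \<Omega> f c" and x: "x \<in> \<Omega>"
  shows "f x = f c"
proof -
  obtain \<phi> where \<phi>: "cdual scY \<phi>" "\<phi> (f x - f c) = complex_of_real (norm (f x - f c))"
    using complex_norming_functional[OF complex_Y] by blast
  have "locally_const_on_lines \<phi> (\<phi> (f c)) c"
    using const_near_local_max[OF SC c max] c unfolding locally_const_on_lines_def by (metis (no_types))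
  then have "locally_const_on_lines \<phi> (\<phi> (f c)) x"
    using locally_const_on_lines_polygon[OF \<phi>(1) dim pc _ x] by blast
  then have "\<phi> (f x) = \<phi> (f c)"
    unfolding locally_const_on_lines_def by (metis norm_zero scale_zero_left add_0_right zero_less_norm_iff)
  then show ?thesis using \<phi> cdual_diff[OF \<phi>(1), of "f x" "f c"] by simp
qed

end

theorem mainTheorem5:
  fixes scX :: "complex \<Rightarrow> 'a::ab_group_add \<Rightarrow> 'a"
    and scY :: "complex \<Rightarrow> 'b::banach \<Rightarrow> 'b"
    and \<Omega> :: "'a set" and f :: "'a \<Rightarrow> 'b"
  assumes "vector_space scX"
    and "dim_ge2 scX"
    and "complex_normed_structure scY"
    and "strictly_convex TYPE('b)"
    and "polygonally_connected scX \<Omega>"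
    and "d_open scX 2 \<Omega>"
    and "gateaux_holomorphic scX scY \<Omega> f"
    and "c \<in> \<Omega>"
    and "tau1_local_max scX \<Omega> f c"
  shows "\<exists>y. \<forall>x\<in>\<Omega>. f x = y"
proof -
  interpret gateaux_holomorphic_map scX scY \<Omega> f
    using assms by (simp add: gateaux_holomorphic_map_def gateaux_holomorphic_map_axioms_def
        complex_vector_space_def)
  show ?thesis using constant_if_local_max assms by blast
qed

end
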